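(* Consider the planted submatrix problem with $\rho\le1/2$. Let $k\ge0$ be an integer, $D=2k+1$, and $f(Y)=\tau_k\big(\frac{1}{\lambda\rho n}\sum_{i=1}^nY_{1i}\big)$. For any $0<r<1$, if \[ \lambda\ge\frac{24}{r\rho\sqrt n}\sqrt{\log8+2D\log(9/\rho)} \quad\text{and}\quad \rho\ge\frac{324}{r^2n}\big[\log8+2D\log(9/\rho)\big], \] then $\mathbb{E}(f(Y)-x)^2\le D^2r^{D-1}$.
   Context: Planted submatrix problem: observe $Y=\lambda vv^\top+W$ ($n\times n$), where $v\in\{0,1\}^n$ has i.i.d. $\mathrm{Bernoulli}(\rho)$ entries, $W$ is symmetric with $W_{ij}=W_{ji}\sim\mathcal{N}(0,1)$ for $i<j$, $W_{ii}\sim\mathcal{N}(0,2)$, the $\{W_{ij}:i\le j\}$ independent and independent of $v$; $\lambda>0$, $\rho\in(0,1)$; target $x=v_1$. $\tau_k(y)=(2k+1)\binom{2k}{k}\int_0^yt^k(1-t)^k\,dt$, a polynomial of degree $2k+1$. Logarithms are natural. *)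

theory Defs
  imports "HOL-Probability.Probability"
begin

text \<open>Indices are 0-based: the n x n matrix is indexed by 0..n-1, and the target
  x = v_1 of the paper is the entry v 0; row 1 of the paper is row 0 here.\<close>

definition tau :: "nat \<Rightarrow> real \<Rightarrow> real" where
  "tau k y = real (2*k+1) * real ((2*k) choose k) *
     (LBINT t = ereal 0..ereal y. t ^ k * (1 - t) ^ k)"

definition signal_measure :: "nat \<Rightarrow> real \<Rightarrow> (nat \<Rightarrow> bool) measure" where
  "signal_measure n \<rho> = PiM {0..<n} (\<lambda>_. measure_pmf (bernoulli_pmf \<rho>))"

definition noise_measure :: "nat \<Rightarrow> (nat \<times> nat \<Rightarrow> real) measure" where
  "noise_measure n = PiM {(i,j). i \<le> j \<and> j < n}
     (\<lambda>(i,j). if i = j then density lborel (normal_density 0 (sqrt 2))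
              else density lborel (normal_density 0 1))"

definition planted_measure :: "nat \<Rightarrow> real \<Rightarrow> ((nat \<Rightarrow> bool) \<times> (nat \<times> nat \<Rightarrow> real)) measure" where
  "planted_measure n \<rho> = signal_measure n \<rho> \<Otimes>\<^sub>M noise_measure n"

definition vvec :: "(nat \<Rightarrow> bool) \<times> (nat \<times> nat \<Rightarrow> real) \<Rightarrow> nat \<Rightarrow> real" where
  "vvec \<omega> i = (if fst \<omega> i then 1 else 0)"

definition Wmat :: "(nat \<Rightarrow> bool) \<times> (nat \<times> nat \<Rightarrow> real) \<Rightarrow> nat \<Rightarrow> nat \<Rightarrow> real" where
  "Wmat \<omega> i j = snd \<omega> (min i j, max i j)"

definition Ymat :: "real \<Rightarrow> (nat \<Rightarrow> bool) \<times> (nat \<times> nat \<Rightarrow> real) \<Rightarrow> nat \<Rightarrow> nat \<Rightarrow> real" where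
  "Ymat lam \<omega> i j = lam * vvec \<omega> i * vvec \<omega> j + Wmat \<omega> i j"

end

theory Submission
  imports Defs
begin

text \<open>
  Let y be the normalised first row sum of Y and d = y - x its error. Because \<tau>_k fixes 0 and 1
  and its derivative t^k (1-t)^k vanishes to order k at both points, the mean value theorem bounds
  (\<tau>_k(y) - x)^2 by a constant times |d|^(2k+2) (1 + |d|)^(2k), and a power is dominated by an
  exponential, so the squared error is at most a constant times exp(\<theta> d) + exp(-\<theta> d) for a tilt
  \<theta> of order k/r. On each value of x, d is affine in the Binomial(n, \<rho>) count of the planted
  coordinates and in the Gaussian row sum of the noise, which are independent with explicit moment
  generating functions; under the hypotheses on \<lambda> and \<rho> each of the two exponential moments is
  at most 2 e^(k+1), and the constant in front supplies the factor r^(2k).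
\<close>

section \<open>The polynomial tau\<close>

definition tau_const :: "nat \<Rightarrow> real" where
  "tau_const k = real (2*k+1) * real ((2*k) choose k)"

definition tau_primitive :: "nat \<Rightarrow> real \<Rightarrow> real" where
  "tau_primitive k x = (\<Sum>j\<le>k. real (k choose j) * (-1)^j * (x^(k+j+1) / real (k+j+1)))"

lemma tau_primitive_has_real_derivative:
  "(tau_primitive k has_real_derivative x^k * (1-x)^k) (at x)"
proof -
  have monomial: "((\<lambda>x. x^(m+1) / real (m+1)) has_real_derivative x^m) (at x)" for m
  proof -
    have nonzero: "real (m+1) \<noteq> 0" by linarith
    show ?thesis
      using DERIV_cdivide[OF DERIV_pow[of "m+1" x UNIV], of "real (m+1)"]
      by (simp only: One_nat_def[symmetric] add_diff_cancel_right' nonzero_mult_div_cancel_left[OF nonzero])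
  qed
  have "(\<Sum>j\<le>k. real (k choose j) * (-1)^j * x^(k+j)) = x^k * (\<Sum>j\<le>k. real (k choose j) * (-x)^j)"
    by (simp add: sum_distrib_left power_add power_minus[of x] mult_ac)
  also have "\<dots> = x^k * (1-x)^k"
    using binomial_ring[of "-x" 1 k] by simp
  finally have binomial: "(\<Sum>j\<le>k. real (k choose j) * (-1)^j * x^(k+j)) = x^k * (1-x)^k" .
  show ?thesis
    unfolding tau_primitive_def binomial[symmetric] by (intro DERIV_sum DERIV_cmult monomial)
qed

lemma tau_eq_primitive: "tau k y = tau_const k * (tau_primitive k y - tau_primitive k 0)"
proof -
  have "(LBINT t = ereal 0..ereal y. t^k * (1-t)^k) = tau_primitive k y - tau_primitive k 0"
    using tau_primitive_has_real_derivative[unfolded has_real_derivative_iff_has_vector_derivative]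
    by (intro interval_integral_FTC_finite continuous_intros) (auto intro: has_vector_derivative_at_within)
  then show ?thesis unfolding tau_def tau_const_def by simp
qed

lemma tau_has_real_derivative: "(tau k has_real_derivative tau_const k * (x^k * (1-x)^k)) (at x)"
proof -
  have "tau k = (\<lambda>y. tau_const k * (tau_primitive k y - tau_primitive k 0))"
    using tau_eq_primitive by blast
  then show ?thesis
    by (auto intro!: derivative_eq_intros tau_primitive_has_real_derivative)
qed

lemma tau_zero [simp]: "tau k 0 = 0"
  by (simp add: tau_eq_primitive)

lemma tau_one [simp]: "tau k 1 = 1"
proof -
  have FTC: "((\<lambda>t. t^k * (1-t)^k) has_integral tau_primitive k 1 - tau_primitive k 0) {0..1}"
    using tau_primitive_has_real_derivative[unfolded has_real_derivative_iff_has_vector_derivative]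
    by (intro fundamental_theorem_of_calculus) (auto intro: has_vector_derivative_at_within)
  have Beta: "((\<lambda>t. t powr (real (k+1) - 1) * (1 - t) powr (real (k+1) - 1))
          has_integral Beta (real (k+1)) (real (k+1))) {0..1}"
    by (rule has_integral_Beta_real) auto
  have "((\<lambda>t. t^k * (1-t)^k) has_integral Beta (real (k+1)) (real (k+1))) {0..1}"
    by (rule has_integral_spike_finite[OF _ _ Beta, of "{0,1}"]) (auto simp: powr_realpow)
  with FTC have "tau_primitive k 1 - tau_primitive k 0 = Beta (real (k+1)) (real (k+1))"
    by (rule has_integral_unique)
  also have "\<dots> = fact k * fact k / (real (2*k+1) * fact (2*k))"
  proof -
    have "Gamma (real (k+1)) = fact k" "Gamma (real (k+1) + real (k+1)) = fact (2*k+1)"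
      using Gamma_fact[of k, where 'a=real] Gamma_fact[of "2*k+1", where 'a=real] by (simp_all add: add.commute)
    moreover have "(fact (2*k+1) :: real) = real (2*k+1) * fact (2*k)"
      by (simp add: fact_Suc del: of_nat_Suc)
    ultimately show ?thesis unfolding Beta_def by simp
  qed
  finally have "tau_primitive k 1 - tau_primitive k 0 = fact k * fact k / (real (2*k+1) * fact (2*k))" .
  moreover have "real ((2*k) choose k) = fact (2*k) / (fact k * fact k)"
    using binomial_fact[of k "2*k", where 'a=real] by (simp add: mult_2)
  ultimately show ?thesis
    by (simp add: tau_eq_primitive tau_const_def)
qed

lemma tau_mean_value:
  "\<exists>z. \<bar>z - a\<bar> \<le> \<bar>y - a\<bar> \<and> tau k y - tau k a = (y - a) * (tau_const k * (z^k * (1-z)^k))"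
proof (cases y a rule: linorder_cases)
  case less
  then obtain z where "y < z" "z < a" "tau k a - tau k y = (a - y) * (tau_const k * (z^k * (1-z)^k))"
    using MVT2[OF less tau_has_real_derivative] by blast
  then show ?thesis by (intro exI[of _ z]) (auto simp: algebra_simps)
next
  case greater
  then obtain z where "a < z" "z < y" "tau k y - tau k a = (y - a) * (tau_const k * (z^k * (1-z)^k))"
    using MVT2[OF greater tau_has_real_derivative] by blast
  then show ?thesis by (intro exI[of _ z]) auto
qed auto

lemma tau_dist_le:
  assumes "a = 0 \<or> a = 1"
  shows "\<bar>tau k y - a\<bar> \<le> tau_const k * \<bar>y - a\<bar>^(k+1) * (1 + \<bar>y - a\<bar>)^k"
proof -
  define d where "d = \<bar>y - a\<bar>"
  obtain z where z: "\<bar>z - a\<bar> \<le> d" "tau k y - tau k a = (y - a) * (tau_const k * (z^k * (1-z)^k))"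
    using tau_mean_value unfolding d_def by blast
  have "tau k a = a" using assms by auto
  have "\<bar>z * (1-z)\<bar> \<le> d * (1 + d)"
    using assms
  proof
    assume "a = 0"
    with z(1) show ?thesis by (auto simp: abs_mult intro!: mult_mono)
  next
    assume "a = 1"
    with z(1) have "\<bar>z\<bar> \<le> 1 + d" "\<bar>1 - z\<bar> \<le> d" by auto
    then show ?thesis by (auto simp: abs_mult mult.commute[of d] intro!: mult_mono)
  qed
  then have "\<bar>z^k * (1-z)^k\<bar> \<le> (d * (1 + d))^k"
    by (simp add: power_mult_distrib[symmetric] power_abs power_mono)
  then have "\<bar>tau k y - a\<bar> \<le> d * (tau_const k * (d * (1 + d))^k)"
    using z(2) \<open>tau k a = a\<close> unfolding d_def
    by (simp add: abs_mult tau_const_def mult_left_mono)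
  also have "\<dots> = tau_const k * d^(k+1) * (1 + d)^k"
    by (simp add: power_mult_distrib mult_ac)
  finally show ?thesis unfolding d_def .
qed

lemma power_le_exp_mult:
  fixes u t :: real
  assumes "0 \<le> u" "0 < t"
  shows "u^m \<le> (real m / t)^m * exp (t * u)"
proof -
  have "(t * u)^m / fact m \<le> exp (t * u)"
    using sum_le_suminf[OF summable_exp_generic[of "t * u"], of "{m}"] assms
    by (simp add: exp_def field_simps)
  then have "(t * u)^m \<le> fact m * exp (t * u)"
    by (simp add: field_simps)
  also have "\<dots> \<le> real m ^ m * exp (t * u)"
    using fact_le_power[of m] by (intro mult_right_mono) auto
  finally show ?thesis
    using assms by (simp add: power_divide field_simps)
qed

lemma tau_sq_dist_le_exp:
  assumes "a = 0 \<or> a = 1" "0 < t"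
  shows "(tau k y - a)^2 \<le> tau_const k ^ 2 * (real (2*k+2) / t)^(2*k+2) * exp ((t + 2 * real k) * \<bar>y - a\<bar>)"
proof -
  define d where "d = \<bar>y - a\<bar>"
  have "d \<ge> 0" unfolding d_def by simp
  have exp_d: "exp (t * d) * exp d ^ (2*k) = exp ((t + 2 * real k) * d)"
    by (simp add: exp_of_nat_mult[symmetric] exp_add[symmetric] algebra_simps)
  have "\<bar>tau k y - a\<bar>^2 \<le> (tau_const k * d^(k+1) * (1 + d)^k)^2"
    using tau_dist_le[OF assms(1)] unfolding d_def by (rule power_mono) simp
  then have "(tau k y - a)^2 \<le> (tau_const k * d^(k+1) * (1 + d)^k)^2"
    by simp
  also have "\<dots> = tau_const k ^ 2 * d^(2*k+2) * (1 + d)^(2*k)"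
    by (simp add: power_mult_distrib flip: power_mult) (simp add: algebra_simps power2_eq_square)
  also have "\<dots> \<le> tau_const k ^ 2 * ((real (2*k+2) / t)^(2*k+2) * exp (t * d)) * exp d ^ (2*k)"
  proof (intro mult_mono mult_left_mono)
    show "d^(2*k+2) \<le> (real (2*k+2) / t)^(2*k+2) * exp (t * d)"
      using power_le_exp_mult[OF \<open>d \<ge> 0\<close> assms(2)] .
    show "(1 + d)^(2*k) \<le> exp d ^ (2*k)"
      using \<open>d \<ge> 0\<close> by (intro power_mono) auto
  qed (use \<open>d \<ge> 0\<close> in auto)
  also have "\<dots> = tau_const k ^ 2 * (real (2*k+2) / t)^(2*k+2) * exp ((t + 2 * real k) * d)"
    using exp_d by (simp add: mult.assoc)
  finally show ?thesis unfolding d_def .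
qed

section \<open>Exponential moments in the planted model\<close>

lemma nn_integral_exp_normal:
  assumes "0 < \<sigma>"
  shows "(\<integral>\<^sup>+x. exp (c * x) \<partial>density lborel (normal_density \<mu> \<sigma>)) = exp (c * \<mu> + c^2 * \<sigma>^2 / 2)"
proof -
  have tilt: "normal_density \<mu> \<sigma> x * exp (c * x)
      = exp (c * \<mu> + c^2 * \<sigma>^2 / 2) * normal_density (\<mu> + c * \<sigma>^2) \<sigma> x" for x
    unfolding normal_density_def using assms
    by (simp add: exp_add[symmetric] power2_eq_square field_simps)
  interpret prob_space "density lborel (normal_density (\<mu> + c * \<sigma>^2) \<sigma>)"
    using prob_space_normal_density assms by blast
  have "(\<integral>\<^sup>+x. exp (c * x) \<partial>density lborel (normal_density \<mu> \<sigma>))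
      = (\<integral>\<^sup>+x. exp (c * \<mu> + c^2 * \<sigma>^2 / 2) * ennreal (normal_density (\<mu> + c * \<sigma>^2) \<sigma> x) \<partial>lborel)"
    by (auto simp: nn_integral_density ennreal_mult'[symmetric] tilt intro!: nn_integral_cong)
  also have "\<dots> = exp (c * \<mu> + c^2 * \<sigma>^2 / 2)"
    using emeasure_space_1 by (simp add: nn_integral_cmult emeasure_density)
  finally show ?thesis .
qed

lemma nn_integral_pair_mult:
  fixes F :: "'a \<Rightarrow> ennreal" and G :: "'b \<Rightarrow> ennreal"
  assumes "sigma_finite_measure M2" "F \<in> borel_measurable M1" "G \<in> borel_measurable M2"
  shows "(\<integral>\<^sup>+\<omega>. F (fst \<omega>) * G (snd \<omega>) \<partial>(M1 \<Otimes>\<^sub>M M2)) = (\<integral>\<^sup>+x. F x \<partial>M1) * (\<integral>\<^sup>+y. G y \<partial>M2)"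
proof -
  interpret sigma_finite_measure M2 by fact
  have "(\<integral>\<^sup>+\<omega>. F (fst \<omega>) * G (snd \<omega>) \<partial>(M1 \<Otimes>\<^sub>M M2)) = (\<integral>\<^sup>+x. \<integral>\<^sup>+y. F x * G y \<partial>M2 \<partial>M1)"
    using assms by (subst nn_integral_fst[symmetric]) auto
  also have "\<dots> = (\<integral>\<^sup>+x. F x * (\<integral>\<^sup>+y. G y \<partial>M2) \<partial>M1)"
    using assms by (simp add: nn_integral_cmult)
  also have "\<dots> = (\<integral>\<^sup>+x. F x \<partial>M1) * (\<integral>\<^sup>+y. G y \<partial>M2)"
    using assms by (simp add: nn_integral_multc)
  finally show ?thesis .
qed

lemma measurable_signal_component [measurable]:
  "i < n \<Longrightarrow> (\<lambda>v. v i) \<in> measurable (signal_measure n \<rho>) (count_space UNIV)"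
  using measurable_component_singleton[of i "{0..<n}" "\<lambda>_. measure_pmf (bernoulli_pmf \<rho>)"]
  by (simp add: signal_measure_def)

lemma nn_integral_exp_signal_count:
  fixes \<rho> c :: real
  assumes "0 \<le> \<rho>" "\<rho> \<le> 1"
  shows "(\<integral>\<^sup>+v. exp (c * (\<Sum>i<n. if v i then 1 else 0)) \<partial>signal_measure n \<rho>)
       = (1 - \<rho> + \<rho> * exp c)^n"
proof -
  interpret product_sigma_finite "\<lambda>_::nat. measure_pmf (bernoulli_pmf \<rho>)"
    by (auto simp: product_sigma_finite_def intro: prob_space_imp_sigma_finite prob_space_measure_pmf)
  have "(\<integral>\<^sup>+v. exp (c * (\<Sum>i<n. if v i then 1 else 0)) \<partial>signal_measure n \<rho>)
      = (\<integral>\<^sup>+v. (\<Prod>i\<in>{0..<n}. ennreal (exp (c * (if v i then 1 else 0)))) \<partial>signal_measure n \<rho>)"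
    by (simp add: prod_ennreal sum_distrib_left exp_sum atLeast0LessThan)
  also have "\<dots> = (\<Prod>i\<in>{0..<n}. \<integral>\<^sup>+b. exp (c * (if b then 1 else 0)) \<partial>measure_pmf (bernoulli_pmf \<rho>))"
    unfolding signal_measure_def by (rule product_nn_integral_prod) auto
  also have "\<dots> = ennreal (1 - \<rho> + \<rho> * exp c) ^ n"
    using assms by (simp add: ennreal_mult'[symmetric] ennreal_plus[symmetric] algebra_simps del: ennreal_plus)
  also have "\<dots> = ennreal ((1 - \<rho> + \<rho> * exp c)^n)"
    using assms by (intro ennreal_power) (auto intro: add_nonneg_nonneg)
  finally show ?thesis .
qed

definition noise_entry_law :: "nat \<times> nat \<Rightarrow> real measure" where
  "noise_entry_law = (\<lambda>(i, j). if i = j then density lborel (normal_density 0 (sqrt 2))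
                                 else density lborel (normal_density 0 1))"

lemma noise_measure_eq: "noise_measure n = PiM {(i, j). i \<le> j \<and> j < n} noise_entry_law"
  by (simp add: noise_measure_def noise_entry_law_def)

lemma prob_space_noise_entry_law: "prob_space (noise_entry_law p)"
  by (auto simp: noise_entry_law_def split: prod.splits intro: prob_space_normal_density)

lemma sets_noise_entry_law [simp]: "sets (noise_entry_law p) = sets borel"
  by (simp add: noise_entry_law_def split: prod.splits)

lemma prob_space_noise_measure: "prob_space (noise_measure n)"
  unfolding noise_measure_eq by (intro prob_space_PiM prob_space_noise_entry_law)

lemma measurable_noise_component [measurable]:
  "j < n \<Longrightarrow> (\<lambda>w. w (0, j)) \<in> borel_measurable (noise_measure n)"
  using measurable_component_singleton[of "(0, j)" "{(i, j). i \<le> j \<and> j < n}" noise_entry_law]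
  by (simp add: noise_measure_eq measurable_cong_sets[OF refl sets_noise_entry_law])

lemma nn_integral_exp_noise_row:
  assumes "1 \<le> n"
  shows "(\<integral>\<^sup>+w. exp (c * (\<Sum>j<n. w (0, j))) \<partial>noise_measure n) = exp (c^2 * real (n+1) / 2)"
proof -
  define I where "I = {(i, j). i \<le> j \<and> j < n}"
  define g where "g = (\<lambda>(p::nat \<times> nat) (x::real). if fst p = 0 then ennreal (exp (c * x)) else 1)"
  interpret product_sigma_finite noise_entry_law
    by (auto simp: product_sigma_finite_def prob_space_noise_entry_law intro: prob_space_imp_sigma_finite)
  have fin: "finite I"
    unfolding I_def by (rule finite_subset[of _ "{..<n} \<times> {..<n}"]) auto
  have prod_row: "(\<Prod>p\<in>I. f p) = (\<Prod>j<n. f (0, j))" if "\<And>p. fst p \<noteq> 0 \<Longrightarrow> f p = 1"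
    for f :: "nat \<times> nat \<Rightarrow> ennreal"
  proof -
    have "{p \<in> I. fst p = 0} = Pair 0 ` {..<n}"
      unfolding I_def by auto
    moreover have "(\<Prod>p\<in>I. f p) = (\<Prod>p\<in>{p \<in> I. fst p = 0}. f p)"
      using fin that by (auto simp: prod.inter_filter intro!: prod.cong)
    ultimately show ?thesis
      by (simp add: prod.reindex inj_on_def)
  qed
  have "(\<integral>\<^sup>+w. exp (c * (\<Sum>j<n. w (0, j))) \<partial>noise_measure n)
      = (\<integral>\<^sup>+w. (\<Prod>p\<in>I. g p (w p)) \<partial>noise_measure n)"
    by (subst prod_row) (auto simp: g_def prod_ennreal exp_sum sum_distrib_left)
  also have "\<dots> = (\<Prod>p\<in>I. integral\<^sup>N (noise_entry_law p) (g p))"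
    unfolding noise_measure_eq I_def[symmetric]
    by (rule product_nn_integral_prod[OF fin]) (simp add: measurable_cong_sets[OF sets_noise_entry_law refl] g_def)
  also have "\<dots> = (\<Prod>j<n. ennreal (exp (c^2 * (if j = 0 then 2 else 1) / 2)))"
    using prob_space.emeasure_space_1[OF prob_space_noise_entry_law]
    by (subst prod_row) (auto simp: g_def noise_entry_law_def nn_integral_exp_normal intro!: prod.cong)
  also have "\<dots> = exp (\<Sum>j<n. c^2 * (if j = 0 then 2 else 1) / 2)"
    by (simp add: prod_ennreal exp_sum)
  also have "\<dots> = exp (c^2 * real (n+1) / 2)"
    using assms by (cases n) (auto simp: sum.lessThan_Suc_shift field_simps simp del: sum.lessThan_Suc)
  finally show ?thesis .
qed

definition signal_count :: "nat \<Rightarrow> (nat \<Rightarrow> bool) \<times> (nat \<times> nat \<Rightarrow> real) \<Rightarrow> real" where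
  "signal_count n \<omega> = (\<Sum>i<n. vvec \<omega> i)"

definition noise_row_sum :: "nat \<Rightarrow> (nat \<Rightarrow> bool) \<times> (nat \<times> nat \<Rightarrow> real) \<Rightarrow> real" where
  "noise_row_sum n \<omega> = (\<Sum>j<n. snd \<omega> (0,j))"

lemma measurable_vvec [measurable]: "i < n \<Longrightarrow> (\<lambda>\<omega>. vvec \<omega> i) \<in> borel_measurable (planted_measure n \<rho>)"
  unfolding vvec_def planted_measure_def by measurable

lemma measurable_signal_count [measurable]: "signal_count n \<in> borel_measurable (planted_measure n \<rho>)"
  unfolding signal_count_def by measurable

lemma measurable_noise_row_sum [measurable]: "noise_row_sum n \<in> borel_measurable (planted_measure n \<rho>)"
  unfolding noise_row_sum_def planted_measure_def by measurable

lemma nn_integral_exp_planted: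
  assumes "0 \<le> \<rho>" "\<rho> \<le> 1" "1 \<le> n"
  shows "(\<integral>\<^sup>+\<omega>. exp (c1 * signal_count n \<omega> + c2 * noise_row_sum n \<omega>) \<partial>planted_measure n \<rho>)
       = ennreal ((1 - \<rho> + \<rho> * exp c1)^n * exp (c2^2 * real (n+1) / 2))"
proof -
  have "(\<integral>\<^sup>+\<omega>. exp (c1 * signal_count n \<omega> + c2 * noise_row_sum n \<omega>) \<partial>planted_measure n \<rho>)
      = (\<integral>\<^sup>+\<omega>. ennreal (exp (c1 * (\<Sum>i<n. if fst \<omega> i then 1 else 0))) * ennreal (exp (c2 * (\<Sum>j<n. snd \<omega> (0,j))))
           \<partial>(signal_measure n \<rho> \<Otimes>\<^sub>M noise_measure n))"
    by (simp add: signal_count_def noise_row_sum_def vvec_def planted_measure_def exp_add ennreal_mult)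
  also have "\<dots> = (\<integral>\<^sup>+v. exp (c1 * (\<Sum>i<n. if v i then 1 else 0)) \<partial>signal_measure n \<rho>)
                 * (\<integral>\<^sup>+w. exp (c2 * (\<Sum>j<n. w (0,j))) \<partial>noise_measure n)"
    by (rule nn_integral_pair_mult[OF prob_space_imp_sigma_finite[OF prob_space_noise_measure]]) measurable
  also have "\<dots> = ennreal ((1 - \<rho> + \<rho> * exp c1)^n) * ennreal (exp (c2^2 * real (n+1) / 2))"
    using assms by (simp add: nn_integral_exp_signal_count nn_integral_exp_noise_row)
  finally show ?thesis
    using assms by (simp add: ennreal_mult)
qed

section \<open>The error of the row statistic\<close>

definition row_statistic :: "real \<Rightarrow> real \<Rightarrow> nat \<Rightarrow> (nat \<Rightarrow> bool) \<times> (nat \<times> nat \<Rightarrow> real) \<Rightarrow> real" where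
  "row_statistic lam \<rho> n \<omega> = 1 / (lam * \<rho> * real n) * (\<Sum>i<n. Ymat lam \<omega> 0 i)"

lemma sum_Ymat_row: "(\<Sum>i<n. Ymat lam \<omega> 0 i) = lam * vvec \<omega> 0 * signal_count n \<omega> + noise_row_sum n \<omega>"
  by (simp add: Ymat_def Wmat_def signal_count_def noise_row_sum_def sum.distrib sum_distrib_left)

lemma measurable_row_statistic [measurable]:
  "1 \<le> n \<Longrightarrow> row_statistic lam \<rho> n \<in> borel_measurable (planted_measure n \<rho>)"
  unfolding row_statistic_def sum_Ymat_row by measurable

text \<open>A bound for the exponential moment of the error in direction s; the two summands account for
  the planted (x = 1) and the unplanted (x = 0) coordinate.\<close>

definition error_mgf_bound :: "nat \<Rightarrow> real \<Rightarrow> real \<Rightarrow> real \<Rightarrow> real" where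
  "error_mgf_bound n \<rho> lam s =
     (exp (-s) * (1 - \<rho> + \<rho> * exp (s / (\<rho> * n)))^n + 1) * exp ((s / (lam * \<rho> * n))^2 * real (n+1) / 2)"

lemma error_mgf_bound_nonneg: "0 \<le> \<rho> \<Longrightarrow> \<rho> \<le> 1 \<Longrightarrow> 0 \<le> error_mgf_bound n \<rho> lam s"
  by (simp add: error_mgf_bound_def add_nonneg_nonneg)

lemma exp_tilted_error_le:
  assumes "0 < lam" "0 < \<rho>" "1 \<le> n"
  shows "exp (s * (row_statistic lam \<rho> n \<omega> - vvec \<omega> 0))
    \<le> exp (-s) * exp (s / (\<rho> * n) * signal_count n \<omega> + s / (lam * \<rho> * n) * noise_row_sum n \<omega>)
      + exp (s / (lam * \<rho> * n) * noise_row_sum n \<omega>)"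
proof (cases "fst \<omega> 0")
  case True
  then have "row_statistic lam \<rho> n \<omega> = signal_count n \<omega> / (\<rho> * n) + noise_row_sum n \<omega> / (lam * \<rho> * n)"
    using assms by (simp add: row_statistic_def sum_Ymat_row vvec_def add_divide_distrib)
  with True have "s * (row_statistic lam \<rho> n \<omega> - vvec \<omega> 0)
      = -s + (s / (\<rho> * n) * signal_count n \<omega> + s / (lam * \<rho> * n) * noise_row_sum n \<omega>)"
    by (simp add: vvec_def algebra_simps)
  then have "exp (s * (row_statistic lam \<rho> n \<omega> - vvec \<omega> 0))
      = exp (-s) * exp (s / (\<rho> * n) * signal_count n \<omega> + s / (lam * \<rho> * n) * noise_row_sum n \<omega>)"
    by (simp only: exp_add)
  then show ?thesis by simp
next
  case False
  then show ?thesis by (simp add: row_statistic_def sum_Ymat_row vvec_def)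
qed

lemma nn_integral_exp_error_le:
  assumes "0 < lam" "0 < \<rho>" "\<rho> \<le> 1" "1 \<le> n"
  shows "(\<integral>\<^sup>+\<omega>. exp (s * (row_statistic lam \<rho> n \<omega> - vvec \<omega> 0)) \<partial>planted_measure n \<rho>)
       \<le> error_mgf_bound n \<rho> lam s"
proof -
  define c1 c2 where "c1 = s / (\<rho> * n)" and "c2 = s / (lam * \<rho> * n)"
  have "(\<integral>\<^sup>+\<omega>. exp (s * (row_statistic lam \<rho> n \<omega> - vvec \<omega> 0)) \<partial>planted_measure n \<rho>)
      \<le> (\<integral>\<^sup>+\<omega>. exp (-s) * ennreal (exp (c1 * signal_count n \<omega> + c2 * noise_row_sum n \<omega>))
                 + ennreal (exp (c2 * noise_row_sum n \<omega>)) \<partial>planted_measure n \<rho>)"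
    using exp_tilted_error_le[OF assms(1,2,4)]
    by (intro nn_integral_mono) (simp add: c1_def c2_def ennreal_mult[symmetric] flip: ennreal_plus)
  also have "\<dots> = exp (-s) * ennreal ((1 - \<rho> + \<rho> * exp c1)^n * exp (c2^2 * real (n+1) / 2))
                 + ennreal (exp (c2^2 * real (n+1) / 2))"
    using assms nn_integral_exp_planted[of \<rho> n 0 c2]
    by (simp add: nn_integral_add nn_integral_cmult nn_integral_exp_planted)
  also have "\<dots> = ennreal (exp (-s) * ((1 - \<rho> + \<rho> * exp c1)^n * exp (c2^2 * real (n+1) / 2))
                         + exp (c2^2 * real (n+1) / 2))"
    using assms by (simp add: ennreal_mult')
  also have "\<dots> = error_mgf_bound n \<rho> lam s"
    by (simp add: error_mgf_bound_def c1_def c2_def algebra_simps)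
  finally show ?thesis by simp
qed

lemma nn_integral_sq_error_le:
  fixes k :: nat
  assumes "0 < lam" "0 < \<rho>" "\<rho> \<le> 1" "1 \<le> n" "0 < t"
  defines "\<theta> \<equiv> t + 2 * real k"
  shows "(\<integral>\<^sup>+\<omega>. (tau k (row_statistic lam \<rho> n \<omega>) - vvec \<omega> 0)^2 \<partial>planted_measure n \<rho>)
     \<le> tau_const k ^ 2 * (real (2*k+2) / t)^(2*k+2) * (error_mgf_bound n \<rho> lam \<theta> + error_mgf_bound n \<rho> lam (-\<theta>))"
proof -
  define C where "C = tau_const k ^ 2 * (real (2*k+2) / t)^(2*k+2)"
  have "C \<ge> 0" using assms by (simp add: C_def)
  have pointwise: "(tau k y - a)^2 \<le> C * (exp (\<theta> * (y - a)) + exp (-\<theta> * (y - a)))"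
    if "a = 0 \<or> a = 1" for y a
  proof -
    have "\<theta> * \<bar>y - a\<bar> = \<theta> * (y - a) \<or> \<theta> * \<bar>y - a\<bar> = -\<theta> * (y - a)"
      by (auto simp: abs_if algebra_simps)
    then have "exp (\<theta> * \<bar>y - a\<bar>) \<le> exp (\<theta> * (y - a)) + exp (-\<theta> * (y - a))"
      by (metis add_increasing add_increasing2 exp_ge_zero order_refl)
    with \<open>C \<ge> 0\<close> have "C * exp (\<theta> * \<bar>y - a\<bar>) \<le> C * (exp (\<theta> * (y - a)) + exp (-\<theta> * (y - a)))"
      by (rule mult_left_mono[rotated])
    with tau_sq_dist_le_exp[OF that assms(5), of k y] show ?thesis
      unfolding C_def \<theta>_def by linarith
  qed
  have "(\<integral>\<^sup>+\<omega>. (tau k (row_statistic lam \<rho> n \<omega>) - vvec \<omega> 0)^2 \<partial>planted_measure n \<rho>)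
      \<le> (\<integral>\<^sup>+\<omega>. C * (ennreal (exp (\<theta> * (row_statistic lam \<rho> n \<omega> - vvec \<omega> 0)))
                    + ennreal (exp (-\<theta> * (row_statistic lam \<rho> n \<omega> - vvec \<omega> 0)))) \<partial>planted_measure n \<rho>)"
    using pointwise \<open>C \<ge> 0\<close>
    by (intro nn_integral_mono) (simp add: vvec_def ennreal_mult[symmetric] flip: ennreal_plus)
  also have "\<dots> = C * ((\<integral>\<^sup>+\<omega>. exp (\<theta> * (row_statistic lam \<rho> n \<omega> - vvec \<omega> 0)) \<partial>planted_measure n \<rho>)
                     + (\<integral>\<^sup>+\<omega>. exp (-\<theta> * (row_statistic lam \<rho> n \<omega> - vvec \<omega> 0)) \<partial>planted_measure n \<rho>))"
    using assms by (simp add: nn_integral_add nn_integral_cmult)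
  also have "\<dots> \<le> C * (ennreal (error_mgf_bound n \<rho> lam \<theta>) + ennreal (error_mgf_bound n \<rho> lam (-\<theta>)))"
    using assms by (intro mult_left_mono add_mono nn_integral_exp_error_le) auto
  also have "\<dots> = ennreal (C * (error_mgf_bound n \<rho> lam \<theta> + error_mgf_bound n \<rho> lam (-\<theta>)))"
    using assms \<open>C \<ge> 0\<close> by (simp add: error_mgf_bound_nonneg ennreal_mult)
  finally show ?thesis unfolding C_def .
qed

section \<open>Numerical estimates\<close>

lemma exp_le_one_plus_sq:
  fixes x :: real
  assumes "\<bar>x\<bar> \<le> 1"
  shows "exp x \<le> 1 + x + x^2"
proof (cases "0 \<le> x")
  case True
  then show ?thesis using assms exp_bound by simp
next
  case False
  define h where "h = - x"
  have h: "0 < h" "h \<le> 1" using False assms unfolding h_def by auto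
  have "exp x = 1 / exp h" unfolding h_def by (simp add: exp_minus field_simps)
  also have "\<dots> \<le> 1 / (1 + h)"
    using h by (intro divide_left_mono) (auto simp: add.commute)
  also have "\<dots> \<le> 1 - h + h^2"
    using h by (simp add: field_simps power2_eq_square power3_eq_cube mult_nonneg_nonneg)
  finally show ?thesis unfolding h_def by simp
qed

lemma binomial_mgf_centered_le:
  fixes \<rho> h :: real
  assumes "0 \<le> \<rho>" "\<rho> \<le> 1" "\<bar>h\<bar> \<le> 1"
  shows "exp (- (real n * \<rho> * h)) * (1 - \<rho> + \<rho> * exp h)^n \<le> exp (real n * \<rho> * h^2)"
proof -
  have "1 - \<rho> + \<rho> * exp h \<le> exp (\<rho> * (exp h - 1))"
    using exp_ge_add_one_self[of "\<rho> * (exp h - 1)"] by (simp add: algebra_simps)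
  also have "\<dots> \<le> exp (\<rho> * (h + h^2))"
    using exp_le_one_plus_sq[OF assms(3)] assms(1) by (simp add: mult_left_mono)
  finally have "(1 - \<rho> + \<rho> * exp h)^n \<le> exp (\<rho> * (h + h^2))^n"
    using assms by (intro power_mono) (auto intro: add_nonneg_nonneg)
  then show ?thesis
    by (simp add: exp_of_nat_mult[symmetric] exp_add[symmetric] exp_minus field_simps)
qed

lemma error_mgf_bound_le:
  assumes "0 < \<rho>" "\<rho> \<le> 1" "1 \<le> n" "\<bar>s\<bar> \<le> \<rho> * n"
  shows "error_mgf_bound n \<rho> lam s \<le> 2 * exp (s^2 / (\<rho> * n) + (s / (lam * \<rho> * n))^2 * real (n+1) / 2)"
proof -
  define h where "h = s / (\<rho> * n)"
  have "\<rho> * n > 0" using assms by simp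
  have s: "s = real n * \<rho> * h" and sq: "s^2 / (\<rho> * n) = real n * \<rho> * h^2"
    using assms unfolding h_def by (simp_all add: field_simps power2_eq_square)
  have "\<bar>h\<bar> \<le> 1"
    using assms \<open>\<rho> * n > 0\<close> unfolding h_def by (simp add: abs_div divide_le_eq_1)
  then have "exp (-s) * (1 - \<rho> + \<rho> * exp h)^n \<le> exp (s^2 / (\<rho> * n))"
    using binomial_mgf_centered_le[of \<rho> h n, folded s sq] assms by simp
  moreover have "1 \<le> exp (s^2 / (\<rho> * n))"
    using \<open>\<rho> * n > 0\<close> by simp
  ultimately have "exp (-s) * (1 - \<rho> + \<rho> * exp h)^n + 1 \<le> 2 * exp (s^2 / (\<rho> * n))"
    by linarith
  then show ?thesis
    unfolding error_mgf_bound_def h_def[symmetric] exp_add mult.assoc[symmetric]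
    by (rule mult_right_mono) simp
qed

lemma error_mgf_bound_pair_le:
  assumes "0 < \<rho>" "\<rho> \<le> 1" "1 \<le> n" "0 \<le> \<theta>" "\<theta> \<le> \<rho> * n"
    and "\<theta>^2 / (\<rho> * n) + (\<theta> / (lam * \<rho> * n))^2 * real (n+1) / 2 \<le> E"
  shows "error_mgf_bound n \<rho> lam \<theta> + error_mgf_bound n \<rho> lam (-\<theta>) \<le> 4 * exp E"
proof -
  have "error_mgf_bound n \<rho> lam s \<le> 2 * exp E" if "s = \<theta> \<or> s = -\<theta>" for s
  proof -
    have "\<bar>s\<bar> \<le> \<rho> * n" "s^2 = \<theta>^2" "(s / (lam * \<rho> * n))^2 = (\<theta> / (lam * \<rho> * n))^2"
      using that assms by (auto simp: power_divide)
    then have "error_mgf_bound n \<rho> lam s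
        \<le> 2 * exp (\<theta>^2 / (\<rho> * n) + (\<theta> / (lam * \<rho> * n))^2 * real (n+1) / 2)"
      using error_mgf_bound_le[of \<rho> n s lam] assms by simp
    also have "\<dots> \<le> 2 * exp E"
      using assms(6) by simp
    finally show ?thesis .
  qed
  from this[of \<theta>] this[of "-\<theta>"] show ?thesis by simp
qed

lemma log_factor_ge:
  assumes "0 < \<rho>" "\<rho> \<le> 1/2"
  shows "2 * (real k + 1) \<le> ln 8 + 2 * real (2*k+1) * ln (9 / \<rho>)"
proof -
  have "18 \<le> 9 / \<rho>"
    using assms by (simp add: field_simps)
  then have "exp 1 \<le> 9 / \<rho>"
    using exp_le by simp
  then have "1 \<le> ln (9 / \<rho>)"
    using assms by (simp add: ln_ge_iff)
  have "2 * (real k + 1) \<le> 2 * real (2*k+1)"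
    by simp
  also have "\<dots> \<le> 2 * real (2*k+1) * ln (9 / \<rho>)"
    using \<open>1 \<le> ln (9 / \<rho>)\<close> by simp
  also have "\<dots> \<le> ln 8 + 2 * real (2*k+1) * ln (9 / \<rho>)"
    by simp
  finally show ?thesis .
qed

lemma signal_tilt_bounds:
  fixes r K B \<theta> \<rho> :: real and n :: nat
  assumes "0 < r" "r \<le> 1" "0 < K" "2 * K \<le> B" "0 \<le> \<theta>" "\<theta> \<le> 18 * K / r"
    and "1 \<le> n" "324 / (r^2 * n) * B \<le> \<rho>"
  shows "\<theta> \<le> \<rho> * n" "\<theta>^2 / (\<rho> * n) \<le> K / 2"
proof -
  have "324 * B / r^2 = 324 / (r^2 * n) * B * n"
    using \<open>1 \<le> n\<close> by (simp add: field_simps)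
  also have "\<dots> \<le> \<rho> * n"
    using assms(8) by (rule mult_right_mono) simp
  finally have "324 * B / r^2 \<le> \<rho> * n" .
  moreover have "648 * K / r^2 \<le> 324 * B / r^2"
    using assms(4) by (simp add: divide_right_mono)
  ultimately have signal: "648 * K / r^2 \<le> \<rho> * n" by linarith
  have "18 * K / r \<le> 648 * K / r^2"
    using assms(1-3) by (simp add: field_simps power2_eq_square)
  with assms(6) signal show "\<theta> \<le> \<rho> * n" by linarith
  have "\<theta>^2 / (\<rho> * n) \<le> (18 * K / r)^2 / (648 * K / r^2)"
    using assms signal by (intro frac_le power_mono) auto
  also have "\<dots> = K / 2"
    using assms(1,3) by (simp add: field_simps power2_eq_square)
  finally show "\<theta>^2 / (\<rho> * n) \<le> K / 2" .
qed

lemma noise_tilt_bound: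
  fixes r K B \<theta> \<rho> lam :: real and n :: nat
  assumes "0 < r" "0 < K" "2 * K \<le> B" "0 \<le> \<theta>" "\<theta> \<le> 18 * K / r"
    and "1 \<le> n" "0 < \<rho>" "24 / (r * \<rho> * sqrt n) * sqrt B \<le> lam"
  shows "(\<theta> / (lam * \<rho> * n))^2 * real (n+1) / 2 \<le> K / 2"
proof -
  have "24 * sqrt B * sqrt n / r \<le> lam * \<rho> * n"
  proof -
    have "24 / (r * \<rho> * sqrt n) * sqrt B * (\<rho> * n) \<le> lam * (\<rho> * n)"
      using assms by (intro mult_right_mono) auto
    moreover have "24 / (r * \<rho> * sqrt n) * sqrt B * (\<rho> * n) = 24 * sqrt B * sqrt n / r"
      using assms real_sqrt_mult_self[of n] by (simp add: field_simps del: real_sqrt_mult_self)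
    ultimately show ?thesis by (simp add: mult.assoc)
  qed
  then have "(24 * sqrt B * sqrt n / r)^2 \<le> (lam * \<rho> * n)^2"
    using assms by (intro power_mono) auto
  moreover have "(24 * sqrt B * sqrt n / r)^2 = 576 * B * n / r^2"
    using assms by (simp add: power_mult_distrib power_divide)
  moreover have "1152 * K * n / r^2 \<le> 576 * B * n / r^2"
    using assms by (simp add: divide_right_mono)
  ultimately have noise: "1152 * K * n / r^2 \<le> (lam * \<rho> * n)^2" by linarith
  have "(\<theta> / (lam * \<rho> * n))^2 \<le> (18 * K / r)^2 / (1152 * K * n / r^2)"
    unfolding power_divide[of \<theta>] using assms noise by (intro frac_le power_mono) auto
  moreover have "real (n+1) / 2 \<le> n"
    using assms by simp
  ultimately have "(\<theta> / (lam * \<rho> * n))^2 * real (n+1) / 2 \<le> (18 * K / r)^2 / (1152 * K * n / r^2) * n"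
    unfolding times_divide_eq_right[symmetric] using assms by (intro mult_mono) auto
  also have "\<dots> = 9 * K / 32"
    using assms by (simp add: field_simps power2_eq_square)
  finally show ?thesis using assms by linarith
qed

lemma error_mgf_bound_tilt_le:
  fixes n k :: nat and lam \<rho> r :: real
  assumes "n \<ge> 1" "0 < \<rho>" "\<rho> \<le> 1/2" "0 < r" "r < 1"
    and "lam \<ge> 24 / (r * \<rho> * sqrt (real n)) * sqrt (ln 8 + 2 * real (2*k+1) * ln (9 / \<rho>))"
    and "\<rho> \<ge> 324 / (r\<^sup>2 * real n) * (ln 8 + 2 * real (2*k+1) * ln (9 / \<rho>))"
  defines "\<theta> \<equiv> 8 * real (2*k+2) / r + 2 * real k"
  shows "error_mgf_bound n \<rho> lam \<theta> + error_mgf_bound n \<rho> lam (-\<theta>) \<le> 4 * exp (real k + 1)"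
proof -
  define K where "K = real k + 1"
  have "2 * real k * r \<le> 2 * K"
    using assms mult_left_le[of r "2 * real k"] by (simp add: K_def)
  then have "2 * real k \<le> 2 * K / r"
    using assms by (simp add: field_simps)
  moreover have "\<theta> = 16 * K / r + 2 * real k" "18 * K / r = 16 * K / r + 2 * K / r" "0 < K / r"
    using assms by (simp_all add: \<theta>_def K_def field_simps)
  ultimately have "0 \<le> \<theta>" "\<theta> \<le> 18 * K / r"
    by simp_all
  moreover have "2 * K \<le> ln 8 + 2 * real (2*k+1) * ln (9 / \<rho>)"
    unfolding K_def using assms(2,3) by (rule log_factor_ge)
  ultimately have tilt: "\<theta> \<le> \<rho> * n" "\<theta>^2 / (\<rho> * n) \<le> K / 2"
      "(\<theta> / (lam * \<rho> * n))^2 * real (n+1) / 2 \<le> K / 2"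
    using assms signal_tilt_bounds[of r K _ \<theta> n \<rho>] noise_tilt_bound[of r K _ \<theta> n \<rho> lam]
    by (auto simp: K_def)
  then have "\<theta>^2 / (\<rho> * n) + (\<theta> / (lam * \<rho> * n))^2 * real (n+1) / 2 \<le> K"
    by linarith
  then show ?thesis
    using assms \<open>0 \<le> \<theta>\<close> tilt(1) unfolding K_def by (intro error_mgf_bound_pair_le) auto
qed

lemma tau_const_sq_le: "tau_const k ^ 2 \<le> real (2*k+1)^2 * 16^k"
proof -
  have "real ((2*k) choose k) \<le> 2^(2*k)"
    using binomial_le_pow2[of "2*k" k] by (metis of_nat_le_iff of_nat_numeral of_nat_power)
  then have "tau_const k \<le> real (2*k+1) * 4^k"
    unfolding tau_const_def by (simp add: power_mult)
  then have "tau_const k ^ 2 \<le> (real (2*k+1) * 4^k)^2"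
    by (rule power_mono) (simp add: tau_const_def)
  moreover have "((4::real)^k)^2 = 16^k"
    by (simp add: power2_eq_square flip: power_mult_distrib)
  ultimately show ?thesis
    by (simp add: power_mult_distrib)
qed

lemma risk_constant_le:
  assumes "0 < r" "r \<le> 1"
  shows "tau_const k ^ 2 * (r/8)^(2*k+2) * (4 * exp (real k + 1)) \<le> real (2*k+1)^2 * r^(2*k)"
proof -
  have exp_factor: "4 * exp (real k + 1) \<le> 16 * 4^k"
  proof -
    have "exp (real k + 1) = exp 1 ^ (k+1)"
      using exp_of_nat_mult[of "k+1" "1::real"] by (simp add: add.commute)
    also have "\<dots> \<le> 4^(k+1)"
      using exp_le by (intro power_mono) auto
    finally show ?thesis by simp
  qed
  have const: "16^k * (q/64)^(k+1) * (16 * 4^k) = q^(k+1) / 4" for q :: real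
  proof -
    have "(16::real)^k * 4^k = 64^k"
      by (simp flip: power_mult_distrib)
    then have "16^k * (q/64)^(k+1) * (16 * 4^k) = (64^k * (q/64)^k) * q * 16 / 64"
      by (simp add: field_simps)
    also have "\<dots> = q^(k+1) / 4"
      by (simp add: power_divide)
    finally show ?thesis .
  qed
  have "tau_const k ^ 2 * (r/8)^(2*k+2) * (4 * exp (real k + 1))
      \<le> real (2*k+1)^2 * 16^k * (r/8)^(2*k+2) * (16 * 4^k)"
    using tau_const_sq_le[of k] exp_factor assms by (intro mult_mono[OF mult_right_mono]) auto
  also have "\<dots> = real (2*k+1)^2 * (16^k * (r^2/64)^(k+1) * (16 * 4^k))"
  proof -
    have "(r/8)^(2*k+2) = ((r/8)^2)^(k+1)"
      by (simp only: power_mult[symmetric] distrib_left mult_1_right)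
    then show ?thesis by (simp add: power_divide mult_ac)
  qed
  also have "\<dots> = real (2*k+1)^2 * r^(2*k) * (r^2 / 4)"
    using const[of "r^2"] by (simp add: power_mult)
  also have "\<dots> \<le> real (2*k+1)^2 * r^(2*k) * 1"
    using assms power_le_one[of r 2] by (intro mult_left_mono) auto
  finally show ?thesis by simp
qed

theorem mainTheorem12:
  fixes n k :: nat and lam \<rho> r :: real
  assumes "n \<ge> 1"
    and "0 < \<rho>" and "\<rho> \<le> 1/2"
    and "0 < lam"
    and "0 < r" and "r < 1"
    and "lam \<ge> 24 / (r * \<rho> * sqrt (real n)) *
            sqrt (ln 8 + 2 * real (2*k+1) * ln (9 / \<rho>))"
    and "\<rho> \<ge> 324 / (r\<^sup>2 * real n) * (ln 8 + 2 * real (2*k+1) * ln (9 / \<rho>))"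
  shows "(\<integral>\<^sup>+ \<omega>. ennreal ((tau k (1 / (lam * \<rho> * real n) * (\<Sum>i<n. Ymat lam \<omega> 0 i))
                              - vvec \<omega> 0)\<^sup>2) \<partial>planted_measure n \<rho>)
         \<le> ennreal (real (2*k+1) ^ 2 * r ^ (2*k))"
proof -
  define t where "t = 8 * real (2*k+2) / r"
  define \<theta> where "\<theta> = t + 2 * real k"
  have "0 < t" "real (2*k+2) / t = r / 8"
    using assms by (simp_all add: t_def del: of_nat_add of_nat_Suc)
  have "(\<integral>\<^sup>+ \<omega>. ennreal ((tau k (row_statistic lam \<rho> n \<omega>) - vvec \<omega> 0)\<^sup>2) \<partial>planted_measure n \<rho>)
      \<le> tau_const k ^ 2 * (r/8)^(2*k+2) * (error_mgf_bound n \<rho> lam \<theta> + error_mgf_bound n \<rho> lam (-\<theta>))"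
    using nn_integral_sq_error_le[OF assms(4,2) _ assms(1) \<open>0 < t\<close>, of k] assms(3)
    unfolding \<open>real (2*k+2) / t = r / 8\<close> \<theta>_def[symmetric] by simp
  also have "\<dots> \<le> ennreal (tau_const k ^ 2 * (r/8)^(2*k+2) * (4 * exp (real k + 1)))"
    using error_mgf_bound_tilt_le[OF assms(1-3,5-8)] assms
    unfolding \<theta>_def t_def by (intro ennreal_leI mult_left_mono) auto
  also have "\<dots> \<le> ennreal (real (2*k+1) ^ 2 * r ^ (2*k))"
    using risk_constant_le[of r k] assms by (intro ennreal_leI) auto
  finally show ?thesis
    unfolding row_statistic_def .
qed

end
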